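(* Let $\varphi$ be a Boolean formula in 3-CNF and let $G$ be the graph constructed from $\varphi$ as described in the context. Let $C\subseteq V(G)$ be a minimum cluster deletion set of $G$. Then $C$ is a vertex cover of $G$. Hence $\mathrm{cvd}(G)=\mathrm{vc}(G)$.
   Context: Let $\varphi$ consist of clauses $C_1,\dots,C_m$ over variables $x_1,\dots,x_n$, each clause containing exactly three literals, $C_i=(L_i^1\vee L_i^2\vee L_i^3)$. The graph $G$ has vertex set $\{u_{r,s,i}: r\in\{1,2,3\}, s\in\{1,\dots,7\}, i\in\{1,\dots,m\}\}\cup\{v_{r,s,j}: r\in\{1,2\}, s\in\{1,2,3\}, j\in\{1,\dots,n\}\}$ and edge set consisting of: $\{u_{r,s,i},u_{r',s',i}\}$ for all $r\ne r'$ in $\{1,2,3\}$, all $s,s'\in\{1,\dots,7\}$, all $i$; $\{v_{1,s,j},v_{2,s',j}\}$ for all $s,s'\in\{1,2,3\}$, all $j$; $\{u_{r,s,i},v_{1,s',j}\}$ for all $s\in\{1,\dots,7\}$, $s'\in\{1,2,3\}$ whenever $L_i^r = x_j$; and $\{u_{r,s,i},v_{2,s',j}\}$ for all $s\in\{1,\dots,7\}$, $s'\in\{1,2,3\}$ whenever $L_i^r=\neg x_j$. A cluster deletion set of $G$ is a set $X\subseteq V(G)$ such that $G-X$ contains no induced path on three vertices; $\mathrm{cvd}(G)$ is the minimum size of such a set. A vertex cover is a set of vertices containing at least one endpoint of every edge; $\mathrm{vc}(G)$ is the minimum size of a vertex cover. *)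

theory Defs
  imports Main
begin

text \<open>Generic graph notions for a graph given by a vertex set VS and an edge predicate E
  (assumed symmetric; only edges between vertices of VS matter).\<close>

definition cluster_deletion_set :: "'a set \<Rightarrow> ('a \<Rightarrow> 'a \<Rightarrow> bool) \<Rightarrow> 'a set \<Rightarrow> bool" where
  "cluster_deletion_set VS E X \<longleftrightarrow> X \<subseteq> VS \<and>
     \<not> (\<exists>a b c. a \<in> VS - X \<and> b \<in> VS - X \<and> c \<in> VS - X \<and> a \<noteq> c \<and>
            E a b \<and> E b c \<and> \<not> E a c)"

definition vertex_cover :: "'a set \<Rightarrow> ('a \<Rightarrow> 'a \<Rightarrow> bool) \<Rightarrow> 'a set \<Rightarrow> bool" where
  "vertex_cover VS E X \<longleftrightarrow> X \<subseteq> VS \<and>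
     (\<forall>a\<in>VS. \<forall>b\<in>VS. E a b \<longrightarrow> a \<in> X \<or> b \<in> X)"

definition min_cluster_deletion_set :: "'a set \<Rightarrow> ('a \<Rightarrow> 'a \<Rightarrow> bool) \<Rightarrow> 'a set \<Rightarrow> bool" where
  "min_cluster_deletion_set VS E X \<longleftrightarrow> cluster_deletion_set VS E X \<and>
     (\<forall>Y. cluster_deletion_set VS E Y \<longrightarrow> card X \<le> card Y)"

definition cvd :: "'a set \<Rightarrow> ('a \<Rightarrow> 'a \<Rightarrow> bool) \<Rightarrow> nat" where
  "cvd VS E = Min {card X | X. cluster_deletion_set VS E X}"

definition vc :: "'a set \<Rightarrow> ('a \<Rightarrow> 'a \<Rightarrow> bool) \<Rightarrow> nat" where
  "vc VS E = Min {card X | X. vertex_cover VS E X}"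

text \<open>A 3-CNF formula with clauses C_1..C_m over x_1..x_n is given by
  L i r = (j, True) meaning L_i^r = x_j, and L i r = (j, False) meaning L_i^r = \<not>x_j
  (for i \<in> {1..m}, r \<in> {1,2,3}).\<close>

datatype vtx = U nat nat nat | V nat nat nat

definition G_verts :: "nat \<Rightarrow> nat \<Rightarrow> vtx set" where
  "G_verts n m =
     {U r s i | r s i. r \<in> {1..3} \<and> s \<in> {1..7} \<and> i \<in> {1..m}} \<union>
     {V r s j | r s j. r \<in> {1..2} \<and> s \<in> {1..3} \<and> j \<in> {1..n}}"

definition G_gen :: "(nat \<Rightarrow> nat \<Rightarrow> nat \<times> bool) \<Rightarrow> vtx \<Rightarrow> vtx \<Rightarrow> bool" where
  "G_gen L x y \<longleftrightarrow>
     (\<exists>r s r' s' i. x = U r s i \<and> y = U r' s' i \<and> r \<noteq> r') \<or>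
     (\<exists>s s' j. x = V 1 s j \<and> y = V 2 s' j) \<or>
     (\<exists>r s i s' j. x = U r s i \<and> y = V 1 s' j \<and> L i r = (j, True)) \<or>
     (\<exists>r s i s' j. x = U r s i \<and> y = V 2 s' j \<and> L i r = (j, False))"

definition G_edge :: "(nat \<Rightarrow> nat \<Rightarrow> nat \<times> bool) \<Rightarrow> vtx \<Rightarrow> vtx \<Rightarrow> bool" where
  "G_edge L x y \<longleftrightarrow> G_gen L x y \<or> G_gen L y x"

end

theory Submission
  imports Defs
begin

text \<open>The vertices u_{r,s,i} (s = 1..7) are pairwise non-adjacent twins, and so are the vertices
  v_{p,s,j} (s = 1..3). Two surviving twins with a common surviving neighbour would form an induced
  P3, so if an edge survives in G - C, all but one vertex of the twin class P of one of its
  endpoints lies in C. Putting P back and deleting its neighbourhood instead isolates P and gives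
  another cluster deletion set. For a class of u-vertices this trades at least 6 vertices for at
  most 1 + 1 + 3 (one survivor from each sibling class of the same clause, three literal
  vertices); for v_{1,*,j} it trades at least 2 vertices for at most one of v_{2,*,j}, the
  u-neighbours of v_{1,*,j} being in C already. Hence a minimum cluster deletion set leaves no
  edge, i.e. it is a vertex cover, and since every vertex cover is a cluster deletion set,
  cvd(G) = vc(G).\<close>

lemma cluster_deletion_setD:
  assumes "cluster_deletion_set VS E X"
    and "a \<in> VS - X" "b \<in> VS - X" "c \<in> VS - X" "a \<noteq> c" "E a b" "E b c"
  shows "E a c"
  using assms unfolding cluster_deletion_set_def by blast

lemma vertex_cover_imp_cluster_deletion_set:
  "vertex_cover VS E X \<Longrightarrow> cluster_deletion_set VS E X"
  unfolding vertex_cover_def cluster_deletion_set_def by blast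

lemma card_independent_diff_cluster_deletion_set_le_1:
  assumes X: "cluster_deletion_set VS E X" and "symp E" and "I \<subseteq> VS"
    and indep: "\<And>x y. x \<in> I \<Longrightarrow> y \<in> I \<Longrightarrow> E x y \<Longrightarrow> x = y"
    and z: "z \<in> VS - X" and adj: "\<And>x. x \<in> I \<Longrightarrow> E x z"
  shows "card (I - X) \<le> 1"
proof (cases "finite (I - X)")
  case True
  have "x = y" if "x \<in> I - X" "y \<in> I - X" for x y
  proof (rule ccontr)
    assume "x \<noteq> y"
    moreover have "E z y" using adj \<open>symp E\<close> that(2) by (blast dest: sympD)
    ultimately have "E x y"
      using cluster_deletion_setD[OF X _ z] adj that \<open>I \<subseteq> VS\<close> by blast
    then show False using indep \<open>x \<noteq> y\<close> that by blast
  qed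
  then show ?thesis using card_le_Suc0_iff_eq[OF True] by simp
qed simp

lemma cluster_deletion_set_isolate:
  assumes X: "cluster_deletion_set VS E X" and "symp E" and "N \<subseteq> VS"
    and nbrs: "\<And>p y. p \<in> P \<Longrightarrow> y \<in> VS \<Longrightarrow> E p y \<Longrightarrow> y \<in> X - P \<union> N"
  shows "cluster_deletion_set VS E (X - P \<union> N)"
  unfolding cluster_deletion_set_def
proof (intro conjI notI)
  show "X - P \<union> N \<subseteq> VS" using X \<open>N \<subseteq> VS\<close> unfolding cluster_deletion_set_def by blast
next
  let ?X' = "X - P \<union> N"
  assume "\<exists>a b c. a \<in> VS - ?X' \<and> b \<in> VS - ?X' \<and> c \<in> VS - ?X' \<and> a \<noteq> c \<and> E a b \<and> E b c \<and> \<not> E a c"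
  then obtain a b c where abc: "a \<in> VS - ?X'" "b \<in> VS - ?X'" "c \<in> VS - ?X'" "a \<noteq> c"
      "E a b" "E b c" "\<not> E a c"
    by blast
  have "a \<notin> P" using nbrs[of a b] abc by blast
  moreover have "b \<notin> P" using nbrs[of b a] sympD[OF \<open>symp E\<close> \<open>E a b\<close>] abc by blast
  moreover have "c \<notin> P" using nbrs[of c b] sympD[OF \<open>symp E\<close> \<open>E b c\<close>] abc by blast
  ultimately have "a \<in> VS - X" "b \<in> VS - X" "c \<in> VS - X" using abc by auto
  then show False using cluster_deletion_setD[OF X] abc by blast
qed

lemma cluster_deletion_set_exchange:
  assumes X: "cluster_deletion_set VS E X" and "symp E" and "finite VS" and "N \<subseteq> VS"
    and "P \<inter> N = {}"
    and "\<And>p y. p \<in> P \<Longrightarrow> y \<in> VS \<Longrightarrow> E p y \<Longrightarrow> y \<in> X - P \<union> N"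
    and gain: "card (N - X) < card (X \<inter> P)"
  shows "\<exists>X'. cluster_deletion_set VS E X' \<and> card X' < card X"
proof (intro exI conjI)
  show "cluster_deletion_set VS E (X - P \<union> N)"
    using cluster_deletion_set_isolate assms by blast
  have "finite X" using X \<open>finite VS\<close> finite_subset unfolding cluster_deletion_set_def by blast
  have "X - P \<union> N = (X - P) \<union> (N - X)" using \<open>P \<inter> N = {}\<close> by blast
  then have "card (X - P \<union> N) \<le> card (X - P) + card (N - X)"
    using card_Un_le by metis
  also have "\<dots> < card (X - P) + card (X \<inter> P)" using gain by simp
  also have "\<dots> = card X" using card_Int_Diff[OF \<open>finite X\<close>, of P] by simp
  finally show "card (X - P \<union> N) < card X" .
qed

lemma cvd_eq_vc_if_min_cluster_deletion_set_vertex_cover: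
  assumes "finite VS" and C: "min_cluster_deletion_set VS E C" and "vertex_cover VS E C"
  shows "cvd VS E = vc VS E"
proof -
  have C_cds: "cluster_deletion_set VS E C"
    and C_le: "\<And>Y. cluster_deletion_set VS E Y \<Longrightarrow> card C \<le> card Y"
    using C unfolding min_cluster_deletion_set_def by auto
  have bounded: "finite {card X | X. P X}" if "\<And>X. P X \<Longrightarrow> X \<subseteq> VS" for P
    by (rule finite_subset[of _ "{..card VS}"]) (use \<open>finite VS\<close> card_mono that in auto)
  have "cvd VS E = card C"
    unfolding cvd_def
    by (rule Min_eqI[OF bounded]) (use C_cds C_le in \<open>auto simp: cluster_deletion_set_def\<close>)
  moreover have "vc VS E = card C"
    unfolding vc_def
    by (rule Min_eqI[OF bounded]) (use \<open>vertex_cover VS E C\<close> C_le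
        vertex_cover_imp_cluster_deletion_set in \<open>auto simp: vertex_cover_def\<close>)
  ultimately show ?thesis by simp
qed

lemma symp_G_edge: "symp (G_edge L)"
  by (auto simp: symp_def G_edge_def)

lemma G_edge_U_U [simp]: "G_edge L (U r s i) (U r' s' i') \<longleftrightarrow> i = i' \<and> r \<noteq> r'"
  by (auto simp: G_edge_def G_gen_def)

lemma G_edge_V_V [simp]:
  "G_edge L (V p s j) (V p' s' j') \<longleftrightarrow> j = j' \<and> (p = 1 \<and> p' = 2 \<or> p = 2 \<and> p' = 1)"
  by (auto simp: G_edge_def G_gen_def)

lemma G_edge_U_V [simp]:
  "G_edge L (U r s i) (V p s' j) \<longleftrightarrow> L i r = (j, True) \<and> p = 1 \<or> L i r = (j, False) \<and> p = 2"
  by (auto simp: G_edge_def G_gen_def)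

lemma G_edge_V_U [simp]:
  "G_edge L (V p s' j) (U r s i) \<longleftrightarrow> L i r = (j, True) \<and> p = 1 \<or> L i r = (j, False) \<and> p = 2"
  by (auto simp: G_edge_def G_gen_def)

lemma G_edge_U_copy: "G_edge L (U r s i) y \<longleftrightarrow> G_edge L (U r t i) y"
  by (cases y) simp_all

lemma U_in_G_verts [simp]: "U r s i \<in> G_verts n m \<longleftrightarrow> r \<in> {1..3} \<and> s \<in> {1..7} \<and> i \<in> {1..m}"
  by (auto simp: G_verts_def)

lemma V_in_G_verts [simp]: "V p s j \<in> G_verts n m \<longleftrightarrow> p \<in> {1..2} \<and> s \<in> {1..3} \<and> j \<in> {1..n}"
  by (auto simp: G_verts_def)

lemma finite_G_verts: "finite (G_verts n m)"
proof (rule finite_subset)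
  show "G_verts n m \<subseteq> (\<lambda>(r, s, i). U r s i) ` ({1..3} \<times> {1..7} \<times> {1..m}) \<union>
      (\<lambda>(p, s, j). V p s j) ` ({1..2} \<times> {1..3} \<times> {1..n})"
    by (auto simp: G_verts_def image_iff)
qed simp

definition U_copies :: "nat \<Rightarrow> nat \<Rightarrow> vtx set" where
  "U_copies r i = (\<lambda>s. U r s i) ` {1..7}"

definition V_copies :: "nat \<Rightarrow> nat \<Rightarrow> vtx set" where
  "V_copies p j = (\<lambda>s. V p s j) ` {1..3}"

lemma U_in_U_copies [simp]: "U r' s i' \<in> U_copies r i \<longleftrightarrow> r' = r \<and> s \<in> {1..7} \<and> i' = i"
  by (auto simp: U_copies_def)

lemma V_notin_U_copies [simp]: "V p s j \<notin> U_copies r i"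
  by (auto simp: U_copies_def)

lemma V_in_V_copies [simp]: "V p' s j' \<in> V_copies p j \<longleftrightarrow> p' = p \<and> s \<in> {1..3} \<and> j' = j"
  by (auto simp: V_copies_def)

lemma U_notin_V_copies [simp]: "U r s i \<notin> V_copies p j"
  by (auto simp: V_copies_def)

lemma card_U_copies: "card (U_copies r i) = 7"
  unfolding U_copies_def by (subst card_image) (auto simp: inj_on_def)

lemma card_V_copies: "card (V_copies p j) = 3"
  unfolding V_copies_def by (subst card_image) (auto simp: inj_on_def)

lemma cluster_deletion_set_shrink_at_U:
  assumes lits: "\<forall>i\<in>{1..m}. \<forall>r\<in>{1..3}. fst (L i r) \<in> {1..n}"
    and X: "cluster_deletion_set (G_verts n m) (G_edge L) X"
    and a: "U r s i \<in> G_verts n m - X" and b: "b \<in> G_verts n m - X"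
    and ab: "G_edge L (U r s i) b"
  shows "\<exists>X'. cluster_deletion_set (G_verts n m) (G_edge L) X' \<and> card X' < card X"
proof -
  have r: "r \<in> {1..3}" and i: "i \<in> {1..m}" using a by auto
  obtain j p where L: "L i r = (j, p)" by fastforce
  have j: "j \<in> {1..n}" using lits r i L by force
  define q :: nat where "q = (if p then 1 else 2)"
  define R where "R = {1..3} - {r}"
  define N where "N = (\<Union>r'\<in>R. U_copies r' i) \<union> V_copies q j"
  have twins: "card (U_copies r' i - X) \<le> 1"
    if "r' \<in> {1..3}" "z \<in> G_verts n m - X" "\<And>x. x \<in> U_copies r' i \<Longrightarrow> G_edge L x z" for r' z
    by (rule card_independent_diff_cluster_deletion_set_le_1[OF X symp_G_edge _ _ that(2,3)])
      (use that(1) i in \<open>auto simp: U_copies_def\<close>)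
  have "card (U_copies r i - X) \<le> 1"
    by (rule twins[OF r b]) (auto simp: U_copies_def intro: G_edge_U_copy[THEN iffD1, OF ab])
  then have gained: "6 \<le> card (X \<inter> U_copies r i)"
    using card_Int_Diff[of "U_copies r i" X] card_U_copies[of r i]
    by (simp add: U_copies_def Int_commute)
  have "card (N - X) \<le> card (\<Union>r'\<in>R. U_copies r' i - X) + card (V_copies q j)"
    by (rule order_trans[OF card_mono card_Un_le]) (auto simp: N_def R_def U_copies_def V_copies_def)
  also have "\<dots> \<le> (\<Sum>r'\<in>R. card (U_copies r' i - X)) + 3"
    by (rule add_mono[OF card_UN_le]) (simp_all add: R_def card_V_copies)
  also have "\<dots> \<le> (\<Sum>r'\<in>R. 1) + 3"
    by (intro add_mono sum_mono twins[OF _ a]) (auto simp: R_def U_copies_def)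
  also have "\<dots> = 5" using r by (simp add: R_def)
  finally have lost: "card (N - X) \<le> 5" .
  show ?thesis
  proof (rule cluster_deletion_set_exchange[OF X symp_G_edge finite_G_verts])
    show "N \<subseteq> G_verts n m"
      using r i j by (auto simp: N_def R_def U_copies_def V_copies_def q_def)
    show "U_copies r i \<inter> N = {}"
      by (auto simp: N_def R_def U_copies_def V_copies_def)
    show "y \<in> X - U_copies r i \<union> N"
      if "x \<in> U_copies r i" "y \<in> G_verts n m" "G_edge L x y" for x y
      using that L by (cases x; cases y) (auto simp: N_def R_def q_def)
    show "card (N - X) < card (X \<inter> U_copies r i)"
      using gained lost by linarith
  qed
qed

lemma cluster_deletion_set_shrink_at_V:
  assumes X: "cluster_deletion_set (G_verts n m) (G_edge L) X"
    and a: "V 1 s j \<in> G_verts n m - X" and b: "V 2 s' j \<in> G_verts n m - X"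
  shows "\<exists>X'. cluster_deletion_set (G_verts n m) (G_edge L) X' \<and> card X' < card X"
proof -
  have j: "j \<in> {1..n}" using a by auto
  have twins: "card (V_copies p j - X) \<le> 1"
    if "p \<in> {1..2}" "z \<in> G_verts n m - X" "\<And>x. x \<in> V_copies p j \<Longrightarrow> G_edge L x z" for p z
    by (rule card_independent_diff_cluster_deletion_set_le_1[OF X symp_G_edge _ _ that(2,3)])
      (use that(1) j in \<open>auto simp: V_copies_def\<close>)
  have "card (V_copies 1 j - X) \<le> 1"
    by (rule twins[OF _ b]) (auto simp: V_copies_def)
  then have gained: "2 \<le> card (X \<inter> V_copies 1 j)"
    using card_Int_Diff[of "V_copies 1 j" X] card_V_copies[of 1 j]
    by (simp add: V_copies_def Int_commute)
  have lost: "card (V_copies 2 j - X) \<le> 1"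
    by (rule twins[OF _ a]) (auto simp: V_copies_def)
  have U_nbr_deleted: "U r t i \<in> X"
    if "U r t i \<in> G_verts n m" "G_edge L (V 1 t' j) (U r t i)" for r t i t'
  proof (rule ccontr)
    assume "U r t i \<notin> X"
    then have u: "U r t i \<in> G_verts n m - X" using that(1) by blast
    have "G_edge L (U r t i) (V 1 s j)" using that(2) by simp
    then have "G_edge L (U r t i) (V 2 s' j)"
      using cluster_deletion_setD[OF X u a b] by simp
    then show False using that(2) by simp
  qed
  show ?thesis
  proof (rule cluster_deletion_set_exchange[OF X symp_G_edge finite_G_verts])
    show "V_copies 2 j \<subseteq> G_verts n m"
      using j by (auto simp: V_copies_def)
    show "V_copies 1 j \<inter> V_copies 2 j = {}"
      by (auto simp: V_copies_def)
    show "y \<in> X - V_copies 1 j \<union> V_copies 2 j"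
      if "x \<in> V_copies 1 j" "y \<in> G_verts n m" "G_edge L x y" for x y
      using that U_nbr_deleted by (cases x; cases y) auto
    show "card (V_copies 2 j - X) < card (X \<inter> V_copies 1 j)"
      using gained lost by linarith
  qed
qed

lemma cluster_deletion_set_shrink_at_edge:
  assumes lits: "\<forall>i\<in>{1..m}. \<forall>r\<in>{1..3}. fst (L i r) \<in> {1..n}"
    and X: "cluster_deletion_set (G_verts n m) (G_edge L) X"
    and a: "a \<in> G_verts n m - X" and b: "b \<in> G_verts n m - X" and ab: "G_edge L a b"
  shows "\<exists>X'. cluster_deletion_set (G_verts n m) (G_edge L) X' \<and> card X' < card X"
proof (cases a)
  case U
  with cluster_deletion_set_shrink_at_U[OF lits X _ b] a ab show ?thesis by simp
next
  case a_V: (V p s j)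
  show ?thesis
  proof (cases b)
    case U
    with cluster_deletion_set_shrink_at_U[OF lits X _ a] b sympD[OF symp_G_edge ab]
    show ?thesis by simp
  next
    case (V p' s' j')
    with ab a_V have "j' = j" "p = 1 \<and> p' = 2 \<or> p = 2 \<and> p' = 1" by simp_all
    with cluster_deletion_set_shrink_at_V[OF X] a b a_V V show ?thesis by auto
  qed
qed

lemma min_cluster_deletion_set_vertex_cover:
  assumes lits: "\<forall>i\<in>{1..m}. \<forall>r\<in>{1..3}. fst (L i r) \<in> {1..n}"
    and C: "min_cluster_deletion_set (G_verts n m) (G_edge L) C"
  shows "vertex_cover (G_verts n m) (G_edge L) C"
  unfolding vertex_cover_def
proof (intro conjI ballI impI)
  show "C \<subseteq> G_verts n m"
    using C unfolding min_cluster_deletion_set_def cluster_deletion_set_def by blast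
  fix a b assume "a \<in> G_verts n m" "b \<in> G_verts n m" "G_edge L a b"
  show "a \<in> C \<or> b \<in> C"
  proof (rule ccontr)
    assume "\<not> (a \<in> C \<or> b \<in> C)"
    then obtain X where "cluster_deletion_set (G_verts n m) (G_edge L) X" "card X < card C"
      using cluster_deletion_set_shrink_at_edge[OF lits _ _ _ \<open>G_edge L a b\<close>] C
        \<open>a \<in> G_verts n m\<close> \<open>b \<in> G_verts n m\<close>
      unfolding min_cluster_deletion_set_def by blast
    then show False using C unfolding min_cluster_deletion_set_def by fastforce
  qed
qed

theorem lemma12:
  fixes n m :: nat and L :: "nat \<Rightarrow> nat \<Rightarrow> nat \<times> bool" and C :: "vtx set"
  assumes "\<forall>i\<in>{1..m}. \<forall>r\<in>{1..3}. fst (L i r) \<in> {1..n}"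
    and "min_cluster_deletion_set (G_verts n m) (G_edge L) C"
  shows "vertex_cover (G_verts n m) (G_edge L) C \<and>
         cvd (G_verts n m) (G_edge L) = vc (G_verts n m) (G_edge L)"
  using min_cluster_deletion_set_vertex_cover[OF assms]
    cvd_eq_vc_if_min_cluster_deletion_set_vertex_cover[OF finite_G_verts assms(2)]
  by blast

end
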